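(* $\lim_{m\to\infty}\frac{\beta_c(m)}{m/2}=1$.
   Context: Let $(\lambda_i)_{i\ge0}$ be the Thue–Morse sequence: $\lambda_0=0$, $\lambda_{2i}=\lambda_i$, $\lambda_{2i+1}=1-\lambda_i$. For $m\in\mathbb{N}$ and $i\ge1$ set $\lambda_i(m)=k+\lambda_i-\lambda_{i-1}$ if $m=2k$ and $\lambda_i(m)=k+\lambda_i$ if $m=2k+1$. $\beta_c(m)$ is the unique solution $\beta>1$ of $\sum_{i=1}^\infty\lambda_i(m)\beta^{-i}=1$. *)

theory Defs
  imports "HOL-Analysis.Analysis"
begin

fun thue_morse :: "nat \<Rightarrow> nat" where
  "thue_morse n = (if n = 0 then 0
     else if even n then thue_morse (n div 2) else 1 - thue_morse (n div 2))"

definition lam :: "nat \<Rightarrow> nat \<Rightarrow> real" where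
  "lam m i = (if even m
      then real (m div 2) + real (thue_morse i) - real (thue_morse (i - 1))
      else real (m div 2) + real (thue_morse i))"

definition beta_c :: "nat \<Rightarrow> real" where
  "beta_c m = (THE \<beta>. \<beta> > 1 \<and> (\<lambda>i. lam m (i + 1) / \<beta> ^ (i + 1)) sums 1)"

end

theory Submission
  imports Defs
begin

text \<open>
  Since the Thue--Morse sequence takes values in \<open>{0, 1}\<close>, every digit \<open>\<lambda>\<^sub>i(m)\<close> lies in
  \<open>[k - 1, k + 1]\<close> where \<open>k = m div 2\<close>. Comparing \<open>\<Sum>\<^sub>i \<lambda>\<^sub>i(m) \<beta>\<^sup>-\<^sup>i\<close> with the geometric
  series \<open>c / (\<beta> - 1)\<close> for \<open>c = k \<plusminus> 1\<close> pins the root \<open>\<beta>\<^sub>c(m)\<close> into \<open>[k, k + 2]\<close>, and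
  \<open>k / (m / 2) \<longlonglongrightarrow> 1\<close>. Existence of the root follows from the intermediate value theorem
  applied to the power series in \<open>1 / \<beta>\<close>, uniqueness from strict monotonicity of the series
  in \<open>\<beta>\<close> when all digits are positive (here \<open>k \<ge> 2\<close>).
\<close>

declare thue_morse.simps[simp del]

lemma thue_morse_le_1: "thue_morse n \<le> 1"
proof (induction n rule: less_induct)
  case (less n)
  show ?case
    using less[of "n div 2"] by (subst thue_morse.simps) auto
qed

lemma lam_bounds: "real (m div 2) - 1 \<le> lam m i \<and> lam m i \<le> real (m div 2) + 1"
  using thue_morse_le_1[of i] thue_morse_le_1[of "i - 1"] by (auto simp: lam_def)

lemma sums_const_over_powers:
  fixes \<beta> c :: real
  assumes "\<beta> > 1"
  shows "(\<lambda>i. c / \<beta> ^ (i + 1)) sums (c / (\<beta> - 1))"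
proof -
  have "(\<lambda>i. (c / \<beta>) * (1 / \<beta>) ^ i) sums ((c / \<beta>) * (1 / (1 - 1 / \<beta>)))"
    using assms by (intro sums_mult geometric_sums) auto
  moreover have "(c / \<beta>) * (1 / (1 - 1 / \<beta>)) = c / (\<beta> - 1)"
    using assms by (simp add: field_simps)
  moreover have "(\<lambda>i. (c / \<beta>) * (1 / \<beta>) ^ i) = (\<lambda>i. c / \<beta> ^ (i + 1))"
    by (simp add: power_one_over)
  ultimately show ?thesis
    by metis
qed

lemma sums_over_powers_bounds:
  fixes a :: "nat \<Rightarrow> real"
  assumes "\<beta> > 1" and "\<And>i. lo \<le> a i" and "\<And>i. a i \<le> hi"
    and "(\<lambda>i. a i / \<beta> ^ (i + 1)) sums s"
  shows "lo / (\<beta> - 1) \<le> s \<and> s \<le> hi / (\<beta> - 1)"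
proof -
  have pow_pos: "0 < \<beta> ^ (i + 1)" for i
    using assms(1) by simp
  have "lo / (\<beta> - 1) \<le> s"
    by (rule sums_le[OF _ sums_const_over_powers[OF assms(1)] assms(4)])
      (use pow_pos assms(2) in \<open>auto intro: divide_right_mono less_imp_le\<close>)
  moreover have "s \<le> hi / (\<beta> - 1)"
    by (rule sums_le[OF _ assms(4) sums_const_over_powers[OF assms(1)]])
      (use pow_pos assms(3) in \<open>auto intro: divide_right_mono less_imp_le\<close>)
  ultimately show ?thesis ..
qed

lemma sums_over_powers_strict_antimono:
  fixes a :: "nat \<Rightarrow> real"
  assumes pos: "\<And>i. 0 < a i" and "0 < \<beta>\<^sub>1" and "\<beta>\<^sub>1 < \<beta>\<^sub>2"
    and s\<^sub>1: "(\<lambda>i. a i / \<beta>\<^sub>1 ^ (i + 1)) sums s\<^sub>1"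
    and s\<^sub>2: "(\<lambda>i. a i / \<beta>\<^sub>2 ^ (i + 1)) sums s\<^sub>2"
  shows "s\<^sub>2 < s\<^sub>1"
proof -
  have termwise: "0 < a i / \<beta>\<^sub>1 ^ (i + 1) - a i / \<beta>\<^sub>2 ^ (i + 1)" for i
  proof -
    have "\<beta>\<^sub>1 ^ (i + 1) < \<beta>\<^sub>2 ^ (i + 1)"
      using assms(2,3) by (intro power_strict_mono) auto
    moreover have "0 < \<beta>\<^sub>2 ^ (i + 1) * \<beta>\<^sub>1 ^ (i + 1)"
      using assms(2,3) by simp
    ultimately have "a i / \<beta>\<^sub>2 ^ (i + 1) < a i / \<beta>\<^sub>1 ^ (i + 1)"
      using divide_strict_left_mono pos by blast
    then show ?thesis by simp
  qed
  have "(\<lambda>i. a i / \<beta>\<^sub>1 ^ (i + 1) - a i / \<beta>\<^sub>2 ^ (i + 1)) sums (s\<^sub>1 - s\<^sub>2)"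
    by (rule sums_diff[OF s\<^sub>1 s\<^sub>2])
  then have "0 < s\<^sub>1 - s\<^sub>2"
    using suminf_pos[of "\<lambda>i. a i / \<beta>\<^sub>1 ^ (i + 1) - a i / \<beta>\<^sub>2 ^ (i + 1)"] termwise
    by (simp add: sums_iff)
  then show ?thesis by simp
qed

lemma sums_over_powers_unique:
  fixes a :: "nat \<Rightarrow> real"
  assumes "\<And>i. 0 < a i" and "0 < \<beta>" and "0 < \<beta>'"
    and "(\<lambda>i. a i / \<beta> ^ (i + 1)) sums s" and "(\<lambda>i. a i / \<beta>' ^ (i + 1)) sums s"
  shows "\<beta> = \<beta>'"
  using sums_over_powers_strict_antimono[of a \<beta> \<beta>' s s]
    sums_over_powers_strict_antimono[of a \<beta>' \<beta> s s] assms
  by (cases \<beta> \<beta>' rule: linorder_cases) auto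

lemma sums_over_powers_eq_1_exists:
  fixes a :: "nat \<Rightarrow> real"
  assumes lo_pos: "0 < lo" and lo: "\<And>i. lo \<le> a i" and hi: "\<And>i. a i \<le> hi"
  shows "\<exists>\<beta>>1. (\<lambda>i. a i / \<beta> ^ (i + 1)) sums 1"
proof -
  define g where "g x = x * (\<Sum>i. a i * x ^ i)" for x :: real
  have summable: "summable (\<lambda>i. a i * x ^ i)" if "\<bar>x\<bar> < 1" for x :: real
  proof (rule summable_comparison_test)
    show "\<exists>N. \<forall>i\<ge>N. norm (a i * x ^ i) \<le> hi * \<bar>x\<bar> ^ i"
    proof (intro exI allI impI)
      fix i
      have "\<bar>a i\<bar> \<le> hi"
        using lo[of i] hi[of i] lo_pos by simp
      then show "norm (a i * x ^ i) \<le> hi * \<bar>x\<bar> ^ i"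
        by (simp add: abs_mult power_abs mult_right_mono)
    qed
    show "summable (\<lambda>i. hi * \<bar>x\<bar> ^ i)"
      using that by (intro summable_mult summable_geometric) simp
  qed
  have g_sums: "(\<lambda>i. a i / (1 / x) ^ (i + 1)) sums g x" if "\<bar>x\<bar> < 1" for x :: real
    using sums_mult[OF summable_sums[OF summable[OF that]], of x]
    by (simp add: g_def power_one_over mult.assoc mult.left_commute)
  have g_bounds: "lo / (1 / x - 1) \<le> g x \<and> g x \<le> hi / (1 / x - 1)" if "0 < x" "x < 1" for x
    using sums_over_powers_bounds[OF _ lo hi g_sums] that by simp
  define x\<^sub>1 x\<^sub>2 where "x\<^sub>1 = 1 / (hi + 1)" and "x\<^sub>2 = 1 / (lo + 1)"
  have "lo \<le> hi"
    using lo[of 0] hi[of 0] by simp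
  then have x: "0 < x\<^sub>1" "x\<^sub>1 \<le> x\<^sub>2" "x\<^sub>2 < 1"
    using lo_pos by (auto simp: x\<^sub>1_def x\<^sub>2_def frac_le)
  have "g x\<^sub>1 \<le> 1" "1 \<le> g x\<^sub>2"
    using g_bounds[of x\<^sub>1] g_bounds[of x\<^sub>2] x lo_pos \<open>lo \<le> hi\<close> by (simp_all add: x\<^sub>1_def x\<^sub>2_def)
  moreover have "continuous_on {x\<^sub>1..x\<^sub>2} g"
  proof (intro continuous_at_imp_continuous_on ballI)
    fix x assume "x \<in> {x\<^sub>1..x\<^sub>2}"
    then have "norm x < norm ((1 + x\<^sub>2) / 2)"
      using x by auto
    moreover have "summable (\<lambda>i. a i * ((1 + x\<^sub>2) / 2) ^ i)"
      using x by (intro summable) auto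
    ultimately show "isCont g x"
      unfolding g_def by (intro continuous_intros isCont_powser)
  qed
  ultimately obtain x where "x\<^sub>1 \<le> x" "x \<le> x\<^sub>2" "g x = 1"
    using IVT'[of g x\<^sub>1 1 x\<^sub>2] x(2) by blast
  with x have "1 / x > 1" "(\<lambda>i. a i / (1 / x) ^ (i + 1)) sums 1"
    using g_sums[of x] by auto
  then show ?thesis by blast
qed

lemma beta_c_bounds:
  assumes "4 \<le> m"
  shows "real (m div 2) \<le> beta_c m \<and> beta_c m \<le> real (m div 2) + 2"
proof -
  let ?root = "\<lambda>\<beta>. \<beta> > 1 \<and> (\<lambda>i. lam m (i + 1) / \<beta> ^ (i + 1)) sums 1"
  have k: "2 \<le> real (m div 2)"
    using assms by simp
  have lo: "real (m div 2) - 1 \<le> lam m (i + 1)" and hi: "lam m (i + 1) \<le> real (m div 2) + 1" for i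
    using lam_bounds by blast+
  have pos: "0 < lam m (i + 1)" for i
    using lo[of i] k by linarith
  have "\<exists>!\<beta>. ?root \<beta>"
    using sums_over_powers_eq_1_exists[OF _ lo hi] k sums_over_powers_unique[OF pos]
    by (intro ex_ex1I) auto
  then have root: "?root (beta_c m)"
    unfolding beta_c_def by (rule theI')
  then have "(real (m div 2) - 1) / (beta_c m - 1) \<le> 1 \<and> 1 \<le> (real (m div 2) + 1) / (beta_c m - 1)"
    using sums_over_powers_bounds[where a = "\<lambda>i. lam m (i + 1)", OF _ lo hi] by blast
  with root show ?thesis
    by (simp add: divide_le_eq le_divide_eq)
qed

lemma beta_c_ratio_bounds:
  assumes "4 \<le> m"
  shows "1 - 1 / real m \<le> beta_c m / (real m / 2) \<and> beta_c m / (real m / 2) \<le> 1 + 4 / real m"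
proof -
  have "real m - 1 \<le> 2 * real (m div 2)" "2 * real (m div 2) \<le> real m"
    by linarith+
  then have "real m - 1 \<le> 2 * beta_c m" "2 * beta_c m \<le> real m + 4"
    using beta_c_bounds[OF assms] by linarith+
  moreover have "beta_c m / (real m / 2) = 2 * beta_c m / real m"
    by simp
  moreover have "1 - 1 / real m = (real m - 1) / real m" "1 + 4 / real m = (real m + 4) / real m"
    using assms by (simp_all add: field_simps)
  ultimately show ?thesis
    by (simp add: divide_right_mono)
qed

theorem lemma4p9:
  shows "(\<lambda>m. beta_c m / (real m / 2)) \<longlonglongrightarrow> 1"
proof (rule tendsto_sandwich)
  show "\<forall>\<^sub>F m in sequentially. 1 - 1 / real m \<le> beta_c m / (real m / 2)"
    and "\<forall>\<^sub>F m in sequentially. beta_c m / (real m / 2) \<le> 1 + 4 * (1 / real m)"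
    using beta_c_ratio_bounds by (auto intro: eventually_sequentiallyI[of 4])
  show "(\<lambda>m. 1 - 1 / real m) \<longlonglongrightarrow> 1"
    and "(\<lambda>m. 1 + 4 * (1 / real m)) \<longlonglongrightarrow> 1"
    using tendsto_diff[OF tendsto_const lim_inverse_n', of 1]
      tendsto_add[OF tendsto_const tendsto_mult[OF tendsto_const lim_inverse_n'], of 1 4]
    by simp_all
qed

end
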